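(* Let $A=(a_n)_{n\ge1}$ and $B=(b_n)_{n\ge1}$ be decreasing sequences of positive real numbers converging to $0$, such that the difference sequences $(a_n-a_{n+1})_{n\ge1}$ and $(b_n-b_{n+1})_{n\ge1}$ are monotonically nonincreasing. If $a_n\le b_n$ for all $n$, then $\overline{\dim}_BA\le\overline{\dim}_BB$ and $\underline{\dim}_BA\le\underline{\dim}_BB$ (the sequences being identified with the sets of their terms).
   Context: For a bounded set $S\subset\mathbb{R}$ and $\varepsilon>0$, $S_\varepsilon=\{y: \mathrm{dist}(y,S)<\varepsilon\}$ and $|S_\varepsilon|$ is its Lebesgue measure. $\mathcal M^{*s}(S)=\limsup_{\varepsilon\to0}|S_\varepsilon|/\varepsilon^{1-s}$, $\mathcal M_*^{s}(S)=\liminf_{\varepsilon\to0}|S_\varepsilon|/\varepsilon^{1-s}$; $\overline{\dim}_BS=\inf\{s\ge0:\mathcal M^{*s}(S)=0\}$ and $\underline{\dim}_BS=\inf\{s\ge0:\mathcal M_*^{s}(S)=0\}$. *)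

theory Defs
  imports "HOL-Analysis.Analysis"
begin

definition eps_nbhd :: "real set \<Rightarrow> real \<Rightarrow> real set" where
  "eps_nbhd S e = {y. infdist y S < e}"

definition upper_mink :: "real \<Rightarrow> real set \<Rightarrow> ereal" where
  "upper_mink s S = Limsup (at_right 0)
      (\<lambda>e. ereal (measure lebesgue (eps_nbhd S e) / e powr (1 - s)))"

definition lower_mink :: "real \<Rightarrow> real set \<Rightarrow> ereal" where
  "lower_mink s S = Liminf (at_right 0)
      (\<lambda>e. ereal (measure lebesgue (eps_nbhd S e) / e powr (1 - s)))"

definition upper_box_dim :: "real set \<Rightarrow> real" where
  "upper_box_dim S = Inf {s. s \<ge> 0 \<and> upper_mink s S = 0}"

definition lower_box_dim :: "real set \<Rightarrow> real" where
  "lower_box_dim S = Inf {s. s \<ge> 0 \<and> lower_mink s S = 0}"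

end

theory Submission
  imports Defs
begin

(* Let x be a positive, strictly decreasing null sequence with nonincreasing gaps
   x n - x (n+1), and S its set of terms.  For e > 0 let K be the first index whose
   gap is smaller than 2e.  Then the e-neighbourhood of S is squeezed:
     (lower)  the intervals around x 1, ..., x K are pairwise disjoint, and the gaps
              after K being < 2e, the whole interval (0, x K) is covered, so
              max (2eK) (x K) <= |S_e|;
     (upper)  for every K >= 1, S_e is covered by the K-1 intervals around
              x 1, ..., x (K-1) plus (-e, x K + e), so |S_e| <= 2eK + x K.
   Applying the lower bound to b and the upper bound to a (at the same K, using
   a K <= b K) gives |A_e| <= 2 |B_e| for all e > 0.  A measure comparison with a
   constant factor transfers vanishing of the upper/lower Minkowski contents from B
   to A, and since every bounded set has vanishing contents for s > 1, the sets
   defining the box dimensions are nonempty, so their infima compare. *)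

section \<open>Neighbourhoods of bounded sets of reals\<close>

lemma open_eps_nbhd: "open (eps_nbhd S e)"
  unfolding eps_nbhd_def by (intro open_Collect_less continuous_intros)

lemma mem_eps_nbhd_iff:
  "S \<noteq> {} \<Longrightarrow> y \<in> eps_nbhd S e \<longleftrightarrow> (\<exists>x\<in>S. dist y x < e)"
  unfolding eps_nbhd_def by (simp add: infdist_notempty cINF_less_iff)

lemma eps_nbhd_subset_interval:
  fixes S :: "real set"
  assumes "S \<noteq> {}" "S \<subseteq> {l..u}"
  shows "eps_nbhd S e \<subseteq> {l-e<..<u+e}"
proof
  fix y assume "y \<in> eps_nbhd S e"
  then obtain z where "z \<in> S" "dist y z < e" using mem_eps_nbhd_iff[OF assms(1)] by blast
  moreover have "l \<le> z" "z \<le> u" using \<open>z \<in> S\<close> assms(2) by auto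
  ultimately show "y \<in> {l-e<..<u+e}" by (auto simp: dist_real_def)
qed

lemma eps_nbhd_lmeasurable:
  fixes S :: "real set"
  assumes "S \<noteq> {}" "S \<subseteq> {l..u}"
  shows "eps_nbhd S e \<in> lmeasurable"
  using eps_nbhd_subset_interval[OF assms] open_eps_nbhd
  by (intro lmeasurable_open) (auto intro: bounded_subset[OF bounded_Ioo])

section \<open>Minkowski contents and box dimensions\<close>

definition mink_ratio :: "real \<Rightarrow> real set \<Rightarrow> real \<Rightarrow> real" where
  "mink_ratio s S e = measure lebesgue (eps_nbhd S e) / e powr (1 - s)"

lemma mink_ratio_nonneg: "0 \<le> mink_ratio s S e"
  unfolding mink_ratio_def by simp

text \<open>A bounded nonempty set of reals has vanishing Minkowski contents for every
  exponent s > 1, since its neighbourhoods have bounded measure.\<close>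
lemma mink_zero_beyond_one:
  fixes S :: "real set"
  assumes ne: "S \<noteq> {}" and sub: "S \<subseteq> {l..u}" and s: "s > 1"
  shows "upper_mink s S = 0 \<and> lower_mink s S = 0"
proof -
  define h where "h = (\<lambda>e::real. (u - l + 2*e) * e powr (s - 1))"
  have lu: "l \<le> u" using ne sub by auto
  have bound: "mink_ratio s S e \<le> h e" if e: "e > 0" for e
  proof -
    have "measure lebesgue (eps_nbhd S e) \<le> measure lebesgue {l-e<..<u+e}"
      using eps_nbhd_subset_interval[OF ne sub] eps_nbhd_lmeasurable[OF ne sub]
      by (intro measure_mono_fmeasurable) auto
    also have "\<dots> = u - l + 2*e" using e lu by simp
    finally have "measure lebesgue (eps_nbhd S e) \<le> u - l + 2*e" .
    moreover have "mink_ratio s S e = measure lebesgue (eps_nbhd S e) * e powr (s - 1)"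
      using powr_minus_divide[of e "s - 1"] by (simp add: mink_ratio_def)
    ultimately show ?thesis unfolding h_def by (simp add: mult_right_mono)
  qed
  have "((\<lambda>e::real. e powr (s - 1)) \<longlongrightarrow> 0) (at_right 0)"
    using s by (intro tendsto_zero_powrI tendsto_ident_at tendsto_const
        eventually_mono[OF eventually_at_right_less]) auto
  then have "(h \<longlongrightarrow> (u - l + 2*0) * 0) (at_right 0)"
    unfolding h_def by (intro tendsto_mult tendsto_add tendsto_const tendsto_ident_at)
  then have h_lim: "(h \<longlongrightarrow> 0) (at_right 0)" by simp
  have "eventually (\<lambda>e. mink_ratio s S e \<le> h e) (at_right 0)"
    using eventually_at_right_less by (rule eventually_mono) (rule bound)
  then have "(mink_ratio s S \<longlongrightarrow> 0) (at_right 0)"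
    using tendsto_sandwich[OF always_eventually _ tendsto_const h_lim] mink_ratio_nonneg
    by blast
  then have "((\<lambda>e. ereal (mink_ratio s S e)) \<longlongrightarrow> 0) (at_right 0)"
    unfolding zero_ereal_def by (rule tendsto_ereal)
  then show ?thesis
    unfolding upper_mink_def lower_mink_def mink_ratio_def[symmetric]
    using lim_imp_Limsup lim_imp_Liminf trivial_limit_at_right_real by blast
qed

lemma mink_zero_if_measure_le:
  assumes C: "C \<ge> 0"
    and le: "\<And>e. e > 0 \<Longrightarrow> measure lebesgue (eps_nbhd S e) \<le> C * measure lebesgue (eps_nbhd T e)"
  shows "upper_mink s T = 0 \<Longrightarrow> upper_mink s S = 0"
    and "lower_mink s T = 0 \<Longrightarrow> lower_mink s S = 0"
proof -
  let ?f = "\<lambda>e. ereal (mink_ratio s S e)" and ?g = "\<lambda>e. ereal (mink_ratio s T e)"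
  have nb: "at_right (0::real) \<noteq> bot" by simp
  have ratio_le: "?f e \<le> ereal C * ?g e" if "e > 0" for e
    using le[OF that] that by (simp add: mink_ratio_def divide_right_mono)
  have le_ev: "eventually (\<lambda>e. ?f e \<le> ereal C * ?g e) (at_right 0)"
    using eventually_at_right_less by (rule eventually_mono) (rule ratio_le)
  have lo: "0 \<le> Liminf (at_right 0) ?f"
    by (intro Liminf_bounded always_eventually) (simp add: mink_ratio_nonneg)
  show "upper_mink s T = 0 \<Longrightarrow> upper_mink s S = 0"
  proof -
    assume T0: "upper_mink s T = 0"
    have "Limsup (at_right 0) ?f \<le> Limsup (at_right 0) (\<lambda>e. ereal C * ?g e)"
      using le_ev by (rule Limsup_mono)
    also have "\<dots> = ereal C * Limsup (at_right 0) ?g"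
      using nb C by (rule Limsup_ereal_mult_left)
    finally show ?thesis
      using T0 lo Liminf_le_Limsup[OF nb, of ?f]
      unfolding upper_mink_def mink_ratio_def by simp
  qed
  show "lower_mink s T = 0 \<Longrightarrow> lower_mink s S = 0"
  proof -
    assume T0: "lower_mink s T = 0"
    have "Liminf (at_right 0) ?f \<le> Liminf (at_right 0) (\<lambda>e. ereal C * ?g e)"
      using le_ev by (rule Liminf_mono)
    also have "\<dots> = ereal C * Liminf (at_right 0) ?g"
      using nb C by (rule Liminf_ereal_mult_left)
    finally show ?thesis
      using T0 lo unfolding lower_mink_def mink_ratio_def by simp
  qed
qed

text \<open>Box dimensions are infima of exponents with vanishing content; they compare as
  soon as the exponent set of the larger set is nonempty.\<close>
lemma upper_box_dim_mono:
  assumes "\<And>s. upper_mink s T = 0 \<Longrightarrow> upper_mink s S = 0" and "r \<ge> 0" "upper_mink r T = 0"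
  shows "upper_box_dim S \<le> upper_box_dim T"
  unfolding upper_box_dim_def using assms
  by (intro cInf_superset_mono) (auto intro!: bdd_belowI[of _ 0])

lemma lower_box_dim_mono:
  assumes "\<And>s. lower_mink s T = 0 \<Longrightarrow> lower_mink s S = 0" and "r \<ge> 0" "lower_mink r T = 0"
  shows "lower_box_dim S \<le> lower_box_dim T"
  unfolding lower_box_dim_def using assms
  by (intro cInf_superset_mono) (auto intro!: bdd_belowI[of _ 0])

section \<open>Neighbourhoods of decreasing sequences\<close>

lemma decreasing_seq_mono:
  fixes x :: "nat \<Rightarrow> real"
  assumes dec: "\<And>n. n \<ge> 1 \<Longrightarrow> x (Suc n) < x n" and "1 \<le> m" "m \<le> n"
  shows "x n \<le> x m"
  using assms(3)
proof (induction n rule: dec_induct)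
  case (step k)
  then show ?case using dec[of k] assms(2) by linarith
qed simp

lemma decreasing_seq_terms_subset:
  fixes x :: "nat \<Rightarrow> real"
  assumes pos: "\<And>n. n \<ge> 1 \<Longrightarrow> x n > 0" and dec: "\<And>n. n \<ge> 1 \<Longrightarrow> x (Suc n) < x n"
  shows "{x n | n. n \<ge> 1} \<subseteq> {0..x 1}"
proof
  fix y assume "y \<in> {x n | n. n \<ge> 1}"
  then obtain n where n: "n \<ge> 1" "y = x n" by auto
  then show "y \<in> {0..x 1}"
    using pos[OF n(1)] decreasing_seq_mono[of x, OF dec, of 1 n] by simp
qed

text \<open>Upper bound: cover the first K-1 points by intervals of length 2e and the rest
  by the single interval (-e, x K + e).\<close>
lemma measure_eps_nbhd_seq_upper:
  fixes x :: "nat \<Rightarrow> real"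
  assumes pos: "\<And>n. n \<ge> 1 \<Longrightarrow> x n > 0"
    and dec: "\<And>n. n \<ge> 1 \<Longrightarrow> x (Suc n) < x n"
    and K: "K \<ge> 1" and e: "e > 0"
  shows "measure lebesgue (eps_nbhd {x n | n. n \<ge> 1} e) \<le> 2*e*K + x K"
proof -
  let ?S = "{x n | n. n \<ge> 1}"
  have ne: "?S \<noteq> {}" by auto
  define U1 where "U1 = (\<Union>n\<in>{1..<K}. {x n - e<..<x n + e})"
  define U2 where "U2 = {-e<..<x K + e}"
  have "eps_nbhd ?S e \<subseteq> U1 \<union> U2"
  proof
    fix y assume "y \<in> eps_nbhd ?S e"
    then obtain n where n: "n \<ge> 1" "dist y (x n) < e" using mem_eps_nbhd_iff[OF ne] by blast
    show "y \<in> U1 \<union> U2"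
    proof (cases "n < K")
      case True
      then have "y \<in> U1"
        unfolding U1_def using n by (intro UN_I[of n]) (auto simp: dist_real_def abs_less_iff)
      then show ?thesis by simp
    next
      case False
      then have "x n \<le> x K" using decreasing_seq_mono[of x, OF dec K] by simp
      then show ?thesis using n pos[OF n(1)] by (auto simp: U2_def dist_real_def)
    qed
  qed
  moreover have "U1 \<union> U2 \<in> lmeasurable"
    by (intro lmeasurable_open) (auto simp: U1_def U2_def intro!: open_Un open_UN)
  ultimately have "measure lebesgue (eps_nbhd ?S e) \<le> measure lebesgue (U1 \<union> U2)"
    using eps_nbhd_lmeasurable[OF ne decreasing_seq_terms_subset[of x, OF pos dec]]
    by (intro measure_mono_fmeasurable) auto
  also have "\<dots> \<le> measure lebesgue U1 + measure lebesgue U2"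
    by (intro measure_Un_le) (auto simp: U1_def U2_def)
  also have "measure lebesgue U1 \<le> (\<Sum>n\<in>{1..<K}. measure lebesgue {x n - e<..<x n + e})"
    unfolding U1_def by (intro measure_UNION_le) auto
  also have "\<dots> = 2*e*(K-1)" using e K by (simp add: of_nat_diff)
  also have "measure lebesgue U2 = x K + 2*e" unfolding U2_def using e pos[OF K] by simp
  finally show ?thesis using K by (simp add: of_nat_diff algebra_simps)
qed

lemma gap_threshold_index:
  fixes x :: "nat \<Rightarrow> real"
  assumes lim: "x \<longlonglongrightarrow> 0"
    and gap: "\<And>n. n \<ge> 1 \<Longrightarrow> x (Suc n) - x (Suc (Suc n)) \<le> x n - x (Suc n)"
    and delta: "delta > 0"
  obtains K where "K \<ge> 1"
    "\<And>n. 1 \<le> n \<Longrightarrow> n < K \<Longrightarrow> delta \<le> x n - x (Suc n)"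
    "\<And>n. K \<le> n \<Longrightarrow> x n - x (Suc n) < delta"
proof -
  define P where "P = (\<lambda>n. 1 \<le> n \<and> x n - x (Suc n) < delta)"
  have "(\<lambda>n. x n - x (Suc n)) \<longlonglongrightarrow> 0 - 0"
    by (intro tendsto_diff lim LIMSEQ_Suc)
  then have "eventually (\<lambda>n. x n - x (Suc n) < delta) sequentially"
    using delta by (intro order_tendstoD(2)) auto
  then obtain N where N: "\<And>n. n \<ge> N \<Longrightarrow> x n - x (Suc n) < delta"
    unfolding eventually_sequentially by blast
  have "P (max N 1)" unfolding P_def using N by auto
  define K where "K = (LEAST n. P n)"
  have PK: "P K" unfolding K_def by (rule LeastI) fact
  then have K1: "K \<ge> 1" by (simp add: P_def)
  have gap_mono: "x n - x (Suc n) \<le> x K - x (Suc K)" if "K \<le> n" for n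
    using that
  proof (induction n rule: dec_induct)
    case (step k)
    then show ?case using gap[of k] K1 by linarith
  qed simp
  show ?thesis
  proof (rule that[OF K1])
    fix n assume n: "1 \<le> n" "n < K"
    have "\<not> P n" using n(2) unfolding K_def by (rule not_less_Least)
    then show "delta \<le> x n - x (Suc n)" using n(1) by (simp add: P_def)
  next
    fix n assume "K \<le> n"
    then show "x n - x (Suc n) < delta" using gap_mono PK by (fastforce simp: P_def)
  qed
qed

text \<open>Lower bound, part 1: if the first K-1 gaps are at least 2e, the e-intervals
  around x 1, ..., x K are pairwise disjoint.\<close>
lemma measure_eps_nbhd_seq_separated:
  fixes x :: "nat \<Rightarrow> real"
  assumes pos: "\<And>n. n \<ge> 1 \<Longrightarrow> x n > 0"
    and dec: "\<And>n. n \<ge> 1 \<Longrightarrow> x (Suc n) < x n"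
    and sep: "\<And>n. 1 \<le> n \<Longrightarrow> n < K \<Longrightarrow> 2*e \<le> x n - x (Suc n)"
    and e: "e > 0"
  shows "2*e*K \<le> measure lebesgue (eps_nbhd {x n | n. n \<ge> 1} e)"
proof -
  let ?S = "{x n | n. n \<ge> 1}"
  have ne: "?S \<noteq> {}" by auto
  define I where "I = (\<lambda>n. {x n - e<..<x n + e})"
  have far: "2*e \<le> x m - x n" if mn: "1 \<le> m" "m < n" "n \<le> K" for m n
  proof -
    obtain p where p: "n = Suc p" using mn(2) by (cases n) auto
    have "x p \<le> x m" using decreasing_seq_mono[of x, OF dec, of m p] mn p by auto
    moreover have "2*e \<le> x p - x n" using sep[of p] mn p by auto
    ultimately show ?thesis by linarith
  qed
  have disj: "pairwise (\<lambda>i j. disjnt (I i) (I j)) {1..K}"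
  proof (rule pairwiseI)
    fix i j assume "i \<in> {1..K}" "j \<in> {1..K}" "i \<noteq> j"
    then consider "1 \<le> i" "i < j" "j \<le> K" | "1 \<le> j" "j < i" "i \<le> K" by fastforce
    then show "disjnt (I i) (I j)"
      by cases (use far in \<open>fastforce simp: disjnt_def I_def\<close>)+
  qed
  have "(\<Union>n\<in>{1..K}. I n) \<subseteq> eps_nbhd ?S e"
  proof
    fix y assume "y \<in> (\<Union>n\<in>{1..K}. I n)"
    then obtain n where "n \<in> {1..K}" "y \<in> I n" by auto
    then show "y \<in> eps_nbhd ?S e" unfolding mem_eps_nbhd_iff[OF ne]
      by (intro bexI[of _ "x n"]) (auto simp: I_def dist_real_def abs_less_iff)
  qed
  then have "measure lebesgue (\<Union>n\<in>{1..K}. I n) \<le> measure lebesgue (eps_nbhd ?S e)"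
    using eps_nbhd_lmeasurable[OF ne decreasing_seq_terms_subset[of x, OF pos dec]]
    by (intro measure_mono_fmeasurable) (auto simp: I_def)
  moreover have "measure lebesgue (\<Union>n\<in>{1..K}. I n) = (\<Sum>n\<in>{1..K}. measure lebesgue (I n))"
    by (intro measure_UNION' disj) (auto simp: I_def)
  moreover have "(\<Sum>n\<in>{1..K}. measure lebesgue (I n)) = 2*e*K"
    using e by (simp add: I_def)
  ultimately show ?thesis by simp
qed

lemma eps_nbhd_seq_covers_tail:
  fixes x :: "nat \<Rightarrow> real"
  assumes lim: "x \<longlonglongrightarrow> 0"
    and close: "\<And>n. K \<le> n \<Longrightarrow> x n - x (Suc n) < 2*e"
    and K: "K \<ge> 1"
  shows "{0<..<x K} \<subseteq> eps_nbhd {x n | n. n \<ge> 1} e"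
proof
  fix y assume y: "y \<in> {0<..<x K}"
  define Q where "Q = (\<lambda>n. K \<le> n \<and> x n < y)"
  have "eventually (\<lambda>n. x n < y) sequentially"
    using y lim by (intro order_tendstoD(2)) auto
  then obtain M where "\<And>n. n \<ge> M \<Longrightarrow> x n < y"
    unfolding eventually_sequentially by blast
  then have "Q (max M K)" by (auto simp: Q_def)
  define m where "m = (LEAST n. Q n)"
  have Qm: "Q m" unfolding m_def by (rule LeastI) fact
  then have "K < m" using y by (auto simp: Q_def order.order_iff_strict)
  then obtain p where p: "m = Suc p" "K \<le> p" by (cases m) auto
  have "\<not> Q p" using not_less_Least[of p Q] p unfolding m_def[symmetric] by simp
  then have "y \<le> x p" using p by (auto simp: Q_def)
  moreover have "x p - x m < 2*e" using close[OF p(2)] p by simp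
  moreover have "x m < y" using Qm by (simp add: Q_def)
  ultimately have "dist y (x m) < e \<or> dist y (x p) < e" by (auto simp: dist_real_def)
  moreover have "m \<ge> 1" "p \<ge> 1" using p K by auto
  ultimately show "y \<in> eps_nbhd {x n | n. n \<ge> 1} e" by (subst mem_eps_nbhd_iff) auto
qed

lemma measure_eps_nbhd_seq_lower:
  fixes x :: "nat \<Rightarrow> real"
  assumes pos: "\<And>n. n \<ge> 1 \<Longrightarrow> x n > 0"
    and dec: "\<And>n. n \<ge> 1 \<Longrightarrow> x (Suc n) < x n"
    and lim: "x \<longlonglongrightarrow> 0"
    and gap: "\<And>n. n \<ge> 1 \<Longrightarrow> x (Suc n) - x (Suc (Suc n)) \<le> x n - x (Suc n)"
    and e: "e > 0"
  obtains K where "K \<ge> 1"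
    "2*e*K \<le> measure lebesgue (eps_nbhd {x n | n. n \<ge> 1} e)"
    "x K \<le> measure lebesgue (eps_nbhd {x n | n. n \<ge> 1} e)"
proof -
  let ?S = "{x n | n. n \<ge> 1}"
  obtain K where K: "K \<ge> 1"
    and sep: "\<And>n. 1 \<le> n \<Longrightarrow> n < K \<Longrightarrow> 2*e \<le> x n - x (Suc n)"
    and close: "\<And>n. K \<le> n \<Longrightarrow> x n - x (Suc n) < 2*e"
    using gap_threshold_index[OF lim gap, of "2*e"] e by auto
  have "x K = measure lebesgue {0<..<x K}" using pos[OF K] by simp
  also have "\<dots> \<le> measure lebesgue (eps_nbhd ?S e)"
    using eps_nbhd_seq_covers_tail[OF lim close K]
      eps_nbhd_lmeasurable[OF _ decreasing_seq_terms_subset[of x, OF pos dec]]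
    by (intro measure_mono_fmeasurable) auto
  finally show ?thesis
    using that[OF K measure_eps_nbhd_seq_separated[of x, OF pos dec sep e]] by blast
qed

lemma measure_eps_nbhd_seq_compare:
  fixes a b :: "nat \<Rightarrow> real"
  assumes a_pos: "\<And>n. n \<ge> 1 \<Longrightarrow> a n > 0"
    and a_dec: "\<And>n. n \<ge> 1 \<Longrightarrow> a (Suc n) < a n"
    and b_pos: "\<And>n. n \<ge> 1 \<Longrightarrow> b n > 0"
    and b_dec: "\<And>n. n \<ge> 1 \<Longrightarrow> b (Suc n) < b n"
    and b_lim: "b \<longlonglongrightarrow> 0"
    and b_gap: "\<And>n. n \<ge> 1 \<Longrightarrow> b (Suc n) - b (Suc (Suc n)) \<le> b n - b (Suc n)"
    and le: "\<And>n. n \<ge> 1 \<Longrightarrow> a n \<le> b n"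
    and e: "e > 0"
  shows "measure lebesgue (eps_nbhd {a n | n. n \<ge> 1} e)
           \<le> 2 * measure lebesgue (eps_nbhd {b n | n. n \<ge> 1} e)"
proof -
  obtain K where K: "K \<ge> 1" "2*e*K \<le> measure lebesgue (eps_nbhd {b n | n. n \<ge> 1} e)"
    "b K \<le> measure lebesgue (eps_nbhd {b n | n. n \<ge> 1} e)"
    using measure_eps_nbhd_seq_lower[of b, OF b_pos b_dec b_lim b_gap e] by blast
  then show ?thesis
    using measure_eps_nbhd_seq_upper[of a, OF a_pos a_dec K(1) e] le[OF K(1)] by linarith
qed

theorem lemma2:
  fixes a b :: "nat \<Rightarrow> real"
  assumes a_pos: "\<And>n. n \<ge> 1 \<Longrightarrow> a n > 0"
    and b_pos: "\<And>n. n \<ge> 1 \<Longrightarrow> b n > 0"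
    and a_dec: "\<And>n. n \<ge> 1 \<Longrightarrow> a (Suc n) < a n"
    and b_dec: "\<And>n. n \<ge> 1 \<Longrightarrow> b (Suc n) < b n"
    and a_lim: "a \<longlonglongrightarrow> 0"
    and b_lim: "b \<longlonglongrightarrow> 0"
    and a_diff: "\<And>n. n \<ge> 1 \<Longrightarrow> a (Suc n) - a (Suc (Suc n)) \<le> a n - a (Suc n)"
    and b_diff: "\<And>n. n \<ge> 1 \<Longrightarrow> b (Suc n) - b (Suc (Suc n)) \<le> b n - b (Suc n)"
    and le: "\<And>n. n \<ge> 1 \<Longrightarrow> a n \<le> b n"
  shows "upper_box_dim {a n | n. n \<ge> 1} \<le> upper_box_dim {b n | n. n \<ge> 1}
       \<and> lower_box_dim {a n | n. n \<ge> 1} \<le> lower_box_dim {b n | n. n \<ge> 1}"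
proof -
  let ?A = "{a n | n. n \<ge> 1}" and ?B = "{b n | n. n \<ge> 1}"
  note cmp = measure_eps_nbhd_seq_compare[OF a_pos a_dec b_pos b_dec b_lim b_diff le]
  have "?B \<noteq> {}" by auto
  then have B2: "upper_mink 2 ?B = 0 \<and> lower_mink 2 ?B = 0"
    using mink_zero_beyond_one[OF _ decreasing_seq_terms_subset[of b, OF b_pos b_dec], of 2] by simp
  have "upper_box_dim ?A \<le> upper_box_dim ?B"
    using mink_zero_if_measure_le(1)[of 2, OF _ cmp] B2 by (intro upper_box_dim_mono[where r = 2]) auto
  moreover have "lower_box_dim ?A \<le> lower_box_dim ?B"
    using mink_zero_if_measure_le(2)[of 2, OF _ cmp] B2 by (intro lower_box_dim_mono[where r = 2]) auto
  ultimately show ?thesis ..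
qed

end
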